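(* Let $\mathcal{R}$ be a set of rules on a finite set $Q$. Then $\mathcal{K}(\mathcal{R})=\mathcal{A}(\mathcal{R})$ if and only if for every pair of nontrivial implicates $(A,q)$, $(A',q')$ of $\mathcal{K}(\mathcal{R})$, both $((A\cup A')\setminus\{q,q'\},q)$ and $((A\cup A')\setminus\{q,q'\},q')$ are implicates of $\mathcal{K}(\mathcal{R})$.
   Context: A rule on $Q$ is a pair $(A,q)$ with $A\subseteq Q$, $q\in Q$; it is nontrivial if $q\notin A$. It accepts $Y\subseteq Q$ if $q\in Y$ implies $Y\cap A\neq\emptyset$. $\mathcal{K}(\mathcal{R})$ is the family of subsets accepted by all rules of $\mathcal{R}$, and $\mathcal{A}(\mathcal{R})$ is the family of $K\in\mathcal{K}(\mathcal{R})$ for which there is a sequence $\emptyset=Y_0\subseteq\dots\subseteq Y_k=K$ of members of $\mathcal{K}(\mathcal{R})$ with $|Y_{i+1}\setminus Y_i|=1$. A rule is an implicate of a family $\mathcal{F}$ if it accepts every member of $\mathcal{F}$. *)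

theory Defs
  imports Main
begin

type_synonym 'a rule = "'a set \<times> 'a"

definition rule_on :: "'a set \<Rightarrow> 'a rule \<Rightarrow> bool" where
  "rule_on Q r \<longleftrightarrow> fst r \<subseteq> Q \<and> snd r \<in> Q"

definition nontrivial :: "'a rule \<Rightarrow> bool" where
  "nontrivial r \<longleftrightarrow> snd r \<notin> fst r"

definition accepts :: "'a rule \<Rightarrow> 'a set \<Rightarrow> bool" where
  "accepts r Y \<longleftrightarrow> (snd r \<in> Y \<longrightarrow> Y \<inter> fst r \<noteq> {})"

definition KR :: "'a set \<Rightarrow> 'a rule set \<Rightarrow> 'a set set" where
  "KR Q R = {Y. Y \<subseteq> Q \<and> (\<forall>r\<in>R. accepts r Y)}"

definition AR :: "'a set \<Rightarrow> 'a rule set \<Rightarrow> 'a set set" where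
  "AR Q R = {K. K \<in> KR Q R \<and>
     (\<exists>k Y. Y 0 = {} \<and> Y k = K \<and> (\<forall>i\<le>k. Y i \<in> KR Q R) \<and>
            (\<forall>i<k. Y i \<subseteq> Y (Suc i) \<and> card (Y (Suc i) - Y i) = 1))}"

definition implicate :: "'a set \<Rightarrow> 'a rule \<Rightarrow> 'a set set \<Rightarrow> bool" where
  "implicate Q r F \<longleftrightarrow> rule_on Q r \<and> (\<forall>Y\<in>F. accepts r Y)"

end

theory Submission
  imports Defs
begin

text \<open>
  If every member of \<open>\<K>(\<R>)\<close> is accessible, walk along an accessibility chain of \<open>Y\<close>:
  the first element of \<open>{q, q'}\<close> to enter the chain, say \<open>q\<close>, forces an element of \<open>A\<close>
  already present, and that element is neither \<open>q\<close> (nontriviality) nor \<open>q'\<close> (it came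
  earlier). Conversely, every nonempty \<open>K \<in> \<K>(\<R>)\<close> must have an element whose removal
  stays in \<open>\<K>(\<R>)\<close>. Otherwise every \<open>x \<in> K\<close> is blocked by a rule \<open>(B, y)\<close> with
  \<open>y \<in> K\<close> and \<open>B \<inter> K = {x}\<close>; merging two blocking rules shows that "\<open>x\<close> blocks \<open>y\<close>"
  is transitive, it is irreflexive because \<open>K\<close> is accepted, and so on the finite set
  \<open>K\<close> some element blocks nothing, a contradiction.
\<close>

inductive accessible :: "'a set set \<Rightarrow> 'a set \<Rightarrow> bool" for F :: "'a set set" where
  empty: "{} \<in> F \<Longrightarrow> accessible F {}"
| insert: "accessible F K \<Longrightarrow> x \<notin> K \<Longrightarrow> insert x K \<in> F \<Longrightarrow> accessible F (insert x K)"

lemma accessible_if_chain: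
  assumes "Y 0 = {}" "\<forall>i\<le>k. Y i \<in> F"
    and "\<forall>i<k. Y i \<subseteq> Y (Suc i) \<and> card (Y (Suc i) - Y i) = 1"
  shows "j \<le> k \<Longrightarrow> accessible F (Y j)"
proof (induction j)
  case 0
  then show ?case using assms(1,2) accessible.empty by fastforce
next
  case (Suc j)
  then have "j < k" by simp
  then have "Y j \<subseteq> Y (Suc j)" "card (Y (Suc j) - Y j) = 1" using assms(3) by auto
  then obtain x where "Y (Suc j) - Y j = {x}" "Y j \<subseteq> Y (Suc j)"
    using card_1_singletonE by metis
  then have "Y (Suc j) = insert x (Y j)" "x \<notin> Y j" by auto
  moreover have "accessible F (Y j)" "Y (Suc j) \<in> F" using Suc assms(2) by auto
  ultimately show ?case using accessible.insert by metis
qed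

lemma chain_if_accessible:
  "accessible F K \<Longrightarrow> \<exists>k Y. Y 0 = {} \<and> Y k = K \<and> (\<forall>i\<le>k. Y i \<in> F) \<and>
     (\<forall>i<k. Y i \<subseteq> Y (Suc i) \<and> card (Y (Suc i) - Y i) = 1)"
proof (induction rule: accessible.induct)
  case empty
  then show ?case by (intro exI[of _ 0] exI[of _ "\<lambda>_. {}"]) simp
next
  case (insert K x)
  then obtain k Y where Y: "Y 0 = {}" "Y k = K" "\<forall>i\<le>k. Y i \<in> F"
      "\<forall>i<k. Y i \<subseteq> Y (Suc i) \<and> card (Y (Suc i) - Y i) = 1"
    by blast
  define Y' where "Y' i = (if i \<le> k then Y i else insert x K)" for i
  have "\<forall>i<Suc k. Y' i \<subseteq> Y' (Suc i) \<and> card (Y' (Suc i) - Y' i) = 1"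
  proof (intro allI impI)
    fix i assume "i < Suc k"
    then consider "i < k" | "i = k" by linarith
    then show "Y' i \<subseteq> Y' (Suc i) \<and> card (Y' (Suc i) - Y' i) = 1"
    proof cases
      case 2
      with \<open>x \<notin> K\<close> have "Y' (Suc i) - Y' i = {x}" by (auto simp: Y'_def Y(2))
      then show ?thesis using 2 by (auto simp: Y'_def Y(2))
    qed (use Y in \<open>auto simp: Y'_def\<close>)
  qed
  moreover have "Y' 0 = {}" "Y' (Suc k) = insert x K" "\<forall>i\<le>Suc k. Y' i \<in> F"
    using Y insert.hyps(3) by (auto simp: Y'_def le_Suc_eq)
  ultimately show ?case by blast
qed

lemma accessible_iff_chain:
  "accessible F K \<longleftrightarrow> (\<exists>k Y. Y 0 = {} \<and> Y k = K \<and> (\<forall>i\<le>k. Y i \<in> F) \<and>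
     (\<forall>i<k. Y i \<subseteq> Y (Suc i) \<and> card (Y (Suc i) - Y i) = 1))"
  using chain_if_accessible accessible_if_chain[of _ _ F] by (metis order_refl)

lemma AR_eq_accessible: "AR Q R = {K \<in> KR Q R. accessible (KR Q R) K}"
  unfolding AR_def accessible_iff_chain ..

lemma accessible_if_removable:
  assumes removable: "\<And>K. K \<in> F \<Longrightarrow> K \<noteq> {} \<Longrightarrow> \<exists>x\<in>K. K - {x} \<in> F"
  shows "finite K \<Longrightarrow> K \<in> F \<Longrightarrow> accessible F K"
proof (induction K rule: finite_psubset_induct)
  case (psubset K)
  show ?case
  proof (cases "K = {}")
    case True
    then show ?thesis using psubset.prems accessible.empty by simp
  next
    case False
    then obtain x where x: "x \<in> K" "K - {x} \<in> F" using removable psubset.prems by blast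
    then have "accessible F (K - {x})" using psubset.IH by blast
    then show ?thesis
      using accessible.insert[of F "K - {x}" x] x psubset.prems by (simp add: insert_absorb)
  qed
qed

definition merge_closed :: "'a set \<Rightarrow> 'a set set \<Rightarrow> bool" where
  "merge_closed Q F \<longleftrightarrow> (\<forall>A q A' q'.
     implicate Q (A, q) F \<and> nontrivial (A, q) \<and> implicate Q (A', q') F \<and> nontrivial (A', q') \<longrightarrow>
     implicate Q ((A \<union> A') - {q, q'}, q) F \<and> implicate Q ((A \<union> A') - {q, q'}, q') F)"

lemma accessible_meets_merged_premise:
  assumes "\<forall>Y\<in>F. accepts (A, q) Y" "\<forall>Y\<in>F. accepts (A', q') Y" "q \<notin> A" "q' \<notin> A'"
  shows "accessible F K \<Longrightarrow> K \<inter> {q, q'} \<noteq> {} \<Longrightarrow> K \<inter> ((A \<union> A') - {q, q'}) \<noteq> {}"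
proof (induction rule: accessible.induct)
  case (insert K x)
  show ?case
  proof (cases "K \<inter> {q, q'} = {}")
    case fresh: True
    with insert.prems have "x = q \<or> x = q'" by auto
    then obtain B p where "(B, p) \<in> {(A, q), (A', q')}" "x = p" by blast
    then obtain w where "w \<in> insert x K" "w \<in> B" "w \<noteq> p"
      using assms insert.hyps(3) unfolding accepts_def by fastforce
    moreover have "w \<noteq> x" using \<open>w \<noteq> p\<close> \<open>x = p\<close> by simp
    ultimately have "w \<in> K" "w \<notin> {q, q'}" "w \<in> A \<union> A'"
      using fresh \<open>(B, p) \<in> {(A, q), (A', q')}\<close> by auto
    then show ?thesis by blast
  next
    case False
    then show ?thesis using insert.IH by blast
  qed
qed simp

lemma merge_closed_if_all_accessible:
  assumes "\<forall>K\<in>F. accessible F K"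
  shows "merge_closed Q F"
  unfolding merge_closed_def
proof (intro allI impI)
  fix A q A' q'
  assume "implicate Q (A, q) F \<and> nontrivial (A, q) \<and> implicate Q (A', q') F \<and> nontrivial (A', q')"
  then have rules: "\<forall>Y\<in>F. accepts (A, q) Y" "\<forall>Y\<in>F. accepts (A', q') Y" "q \<notin> A" "q' \<notin> A'"
    and "rule_on Q (A, q)" "rule_on Q (A', q')"
    by (auto simp: implicate_def nontrivial_def)
  then have "rule_on Q ((A \<union> A') - {q, q'}, p)" if "p \<in> {q, q'}" for p
    using that by (auto simp: rule_on_def)
  moreover have "accepts ((A \<union> A') - {q, q'}, p) Y" if "p \<in> {q, q'}" "Y \<in> F" for p Y
    using accessible_meets_merged_premise[OF rules] assms that by (auto simp: accepts_def)
  ultimately show "implicate Q ((A \<union> A') - {q, q'}, q) F \<and> implicate Q ((A \<union> A') - {q, q'}, q') F"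
    by (simp add: implicate_def)
qed

lemma finite_transitive_has_maximal:
  assumes "finite S" "S \<noteq> {}"
    and "\<And>x y z. P x y \<Longrightarrow> P y z \<Longrightarrow> P x z" "\<And>x. \<not> P x x"
  shows "\<exists>m\<in>S. \<forall>y\<in>S. \<not> P m y"
  using assms(1,2)
proof (induction S rule: finite_ne_induct)
  case (insert x S)
  then obtain m where m: "m \<in> S" "\<forall>y\<in>S. \<not> P m y" by blast
  show ?case
  proof (cases "P m x")
    case True
    then have "\<forall>y\<in>insert x S. \<not> P x y" using m assms(3,4) by blast
    then show ?thesis by blast
  next
    case False
    then show ?thesis using m by blast
  qed
qed (use assms(4) in simp)

lemma finite_if_mem_KR: "finite Q \<Longrightarrow> K \<in> KR Q R \<Longrightarrow> finite K"
  by (auto simp: KR_def intro: finite_subset)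

lemma blocking_implicate:
  assumes "\<forall>r\<in>R. rule_on Q r" "K \<in> KR Q R" "x \<in> K" "K - {x} \<notin> KR Q R"
  obtains B y where "y \<in> K" "implicate Q (B, y) (KR Q R)" "y \<notin> B" "B \<inter> K \<subseteq> {x}"
proof -
  obtain B y where r: "(B, y) \<in> R" "\<not> accepts (B, y) (K - {x})"
    using assms(2,4) by (auto simp: KR_def)
  then have "y \<in> K" "y \<noteq> x" "B \<inter> K \<subseteq> {x}" by (auto simp: accepts_def)
  moreover have "implicate Q (B, y) (KR Q R)"
    using assms(1) r(1) by (auto simp: implicate_def KR_def)
  ultimately show thesis using that by blast
qed

lemma removable_if_merge_closed:
  assumes "finite Q" "\<forall>r\<in>R. rule_on Q r" "merge_closed Q (KR Q R)"
    and K: "K \<in> KR Q R" "K \<noteq> {}"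
  shows "\<exists>x\<in>K. K - {x} \<in> KR Q R"
proof (rule ccontr)
  assume none: "\<not> (\<exists>x\<in>K. K - {x} \<in> KR Q R)"
  define blocks where "blocks x y \<longleftrightarrow>
      y \<in> K \<and> (\<exists>B. implicate Q (B, y) (KR Q R) \<and> y \<notin> B \<and> B \<inter> K \<subseteq> {x})" for x y
  have blocks_trans: "blocks x z" if xy: "blocks x y" and yz: "blocks y z" for x y z
  proof -
    obtain B where B: "implicate Q (B, y) (KR Q R)" "y \<notin> B" "B \<inter> K \<subseteq> {x}"
      using xy unfolding blocks_def by blast
    obtain C where C: "z \<in> K" "implicate Q (C, z) (KR Q R)" "z \<notin> C" "C \<inter> K \<subseteq> {y}"
      using yz unfolding blocks_def by blast
    have "nontrivial (B, y)" "nontrivial (C, z)" using B(2) C(3) by (simp_all add: nontrivial_def)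
    then have "implicate Q ((B \<union> C) - {y, z}, z) (KR Q R)"
      using assms(3)[unfolded merge_closed_def, rule_format, of B y C z] B(1) C(2) by blast
    moreover have "((B \<union> C) - {y, z}) \<inter> K \<subseteq> {x}" using B C by auto
    ultimately show ?thesis using C(1) unfolding blocks_def by blast
  qed
  have blocks_irrefl: "\<not> blocks x x" for x
    using K(1) by (auto simp: blocks_def implicate_def accepts_def)
  have blocked: "\<exists>y\<in>K. blocks x y" if xK: "x \<in> K" for x
  proof -
    have "K - {x} \<notin> KR Q R" using none xK by (meson bexI)
    then obtain B y where "y \<in> K" "implicate Q (B, y) (KR Q R)" "y \<notin> B" "B \<inter> K \<subseteq> {x}"
      by (rule blocking_implicate[OF assms(2) K(1) xK])
    then show ?thesis unfolding blocks_def by blast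
  qed
  obtain m where "m \<in> K" "\<forall>y\<in>K. \<not> blocks m y"
    using finite_transitive_has_maximal[OF finite_if_mem_KR[OF assms(1) K(1)] K(2), of blocks]
      blocks_trans blocks_irrefl by blast
  then show False using blocked by blast
qed

theorem lemma3p10:
  fixes Q :: "'a set" and R :: "'a rule set"
  assumes "finite Q" and "\<forall>r\<in>R. rule_on Q r"
  shows "KR Q R = AR Q R \<longleftrightarrow>
    (\<forall>A q A' q'.
       implicate Q (A, q) (KR Q R) \<and> nontrivial (A, q) \<and>
       implicate Q (A', q') (KR Q R) \<and> nontrivial (A', q') \<longrightarrow>
       implicate Q ((A \<union> A') - {q, q'}, q) (KR Q R) \<and>
       implicate Q ((A \<union> A') - {q, q'}, q') (KR Q R))"
proof -
  have "KR Q R = AR Q R \<longleftrightarrow> (\<forall>K\<in>KR Q R. accessible (KR Q R) K)"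
    unfolding AR_eq_accessible by blast
  also have "\<dots> \<longleftrightarrow> merge_closed Q (KR Q R)"
  proof
    assume "merge_closed Q (KR Q R)"
    then have "\<exists>x\<in>K. K - {x} \<in> KR Q R" if "K \<in> KR Q R" "K \<noteq> {}" for K
      using removable_if_merge_closed[OF assms] that by blast
    then show "\<forall>K\<in>KR Q R. accessible (KR Q R) K"
      using accessible_if_removable finite_if_mem_KR[OF assms(1)] by blast
  qed (rule merge_closed_if_all_accessible)
  finally show ?thesis unfolding merge_closed_def .
qed

end
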